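(* Let $I\ge 2$, $M\ge 1$ be integers and let $N\ge 2$ be an even integer. Fix constants $\lambda>0$, $c>0$, $\Delta f>0$, $\sigma>0$; antenna positions $\mathbf{q}_1,\dots,\mathbf{q}_M\in\mathbb{R}^3$; rotation matrices $\boldsymbol{\Omega}_1,\dots,\boldsymbol{\Omega}_I\in\mathbb{R}^{3\times 3}$ (with $\boldsymbol{\Omega}_i^{\mathrm T}\boldsymbol{\Omega}_i=\mathbf{I}_3$, $\det\boldsymbol{\Omega}_i=1$); displacements $\boldsymbol{\delta}_1,\dots,\boldsymbol{\delta}_I\in\mathbb{R}^3$; and subcarrier frequencies $(f_1,\dots,f_N)=\Delta f\cdot(-N/2,\dots,-1,1,\dots,N/2)$. Let $\mathbf{p}\in\mathbb{R}^3$ with $\mathbf{p}\neq\boldsymbol{\delta}_i$ for all $i$, write $\tilde{\mathbf{p}}_i=\mathbf{p}-\boldsymbol{\delta}_i$, and let $\gamma_1,\dots,\gamma_I>0$, $\beta_1,\dots,\beta_I\in\mathbb{R}$. For real numbers $t_1,\dots,t_I$ define, for $i=1,\dots,I$, $m=1,\dots,M$, $n=1,\dots,N$, $$\mu_{i,m,n}(\mathbf{p},t_i,\gamma_i,\beta_i)=\gamma_i e^{\mathrm{j}\beta_i}\exp\!\Big(\mathrm{j}\tfrac{2\pi}{\lambda}\tfrac{(\mathbf{p}-\boldsymbol{\delta}_i)^{\mathrm T}}{\|\mathbf{p}-\boldsymbol{\delta}_i\|}\boldsymbol{\Omega}_i\mathbf{q}_m\Big)\exp\!\Big(-\mathrm{j}2\pi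 f_n\big(\tfrac{\|\mathbf{p}-\boldsymbol{\delta}_i\|}{c}-t_i\big)\Big).$$ Consider observations $[\mathbf{H}_i]_{m,n}=\mu_{i,m,n}+w_{i,m,n}$ with $w_{i,m,n}$ i.i.d. circularly symmetric complex Gaussian of variance $\sigma^2$. (VLA) The parameter vector is $\boldsymbol{\varepsilon}=[\mathbf{p}^{\mathrm T},\tau_1,\dots,\tau_I,\gamma_1,\beta_1,\dots,\gamma_I,\beta_I]^{\mathrm T}\in\mathbb{R}^{3+3I}$, with $t_i=\tau_i$ in the $i$-th mean. (RLA) The parameter vector is $\bar{\boldsymbol{\varepsilon}}=[\mathbf{p}^{\mathrm T},\tau,\gamma_1,\beta_1,\dots,\gamma_I,\beta_I]^{\mathrm T}\in\mathbb{R}^{4+2I}$, with $t_i=\tau$ for all $i$. In each case the Fisher information matrix has entries $$[\mathbf{J}]_{s,s'}=\frac{2}{\sigma^2}\,\Re\Big\{\sum_{i=1}^{I}\sum_{n=1}^{N}\sum_{m=1}^{M}\frac{\partial \mu_{i,m,n}^{*}}{\partial[\boldsymbol{\varepsilon}]_s}\frac{\partial \mu_{i,m,n}}{\partial[\boldsymbol{\varepsilon}]_{s'}}\Big\},$$ and the equivalent Fisher information matrix for $\mathbf{p}$ is the Schur complement $\mathbf{J}_{\mathbf{p}\mathbf{p}}-\mathbf{J}_{\mathbf{p}\boldsymbol{\eta}}\mathbf{J}_{\boldsymbol{\eta}\boldsymbol{\eta}}^{-1}\mathbf{J}_{\boldsymbol{\eta}\mathbf{p}}$, where $\boldsymbol{\eta}$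 denotes all parameters other than $\mathbf{p}$. Let $\mathbf{V}^{\mathbf{p},\mathbf{p}}$ be this $3\times3$ matrix for the VLA model and $\mathbf{R}^{\mathbf{p},\mathbf{p}}$ for the RLA model. Then $$\mathbf{R}^{\mathbf{p},\mathbf{p}}-\mathbf{V}^{\mathbf{p},\mathbf{p}}=\sum_{i=1}^{I-1}\sum_{j=i+1}^{I}\zeta_{i,j}\Big(\frac{\tilde{\mathbf{p}}_i}{\|\tilde{\mathbf{p}}_i\|}-\frac{\tilde{\mathbf{p}}_j}{\|\tilde{\mathbf{p}}_j\|}\Big)\Big(\frac{\tilde{\mathbf{p}}_i}{\|\tilde{\mathbf{p}}_i\|}-\frac{\tilde{\mathbf{p}}_j}{\|\tilde{\mathbf{p}}_j\|}\Big)^{\mathrm T},\qquad \zeta_{i,j}=\frac{2\pi^2\Delta f^2MN(N+1)(N+2)}{3\sigma^2c^2}\cdot\frac{\gamma_i^2\gamma_j^2}{\sum_{k=1}^{I}\gamma_k^2},$$ and $$\operatorname{tr}\big(\mathbf{R}^{\mathbf{p},\mathbf{p}}-\mathbf{V}^{\mathbf{p},\mathbf{p}}\big)=\sum_{i=1}^{I-1}\sum_{j=i+1}^{I}2\zeta_{i,j}(1-\cos\rho_{i,j}),\qquad \rho_{i,j}=\arccos\!\Big(\frac{\tilde{\mathbf{p}}_i^{\mathrm T}\tilde{\mathbf{p}}_j}{\|\tilde{\mathbf{p}}_i\|\|\tilde{\mathbf{p}}_j\|}\Big).$$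
   Context: Setting: a single-antenna source at unknown position $\mathbf{p}$ is observed over $N$ OFDM subcarriers by an $M$-antenna array at $I$ poses (displacement $\boldsymbol{\delta}_i$, rotation $\boldsymbol{\Omega}_i$); $\gamma_i=|\alpha_i|$ and $\beta_i=\angle\alpha_i$ are the magnitude and phase of the complex channel gain at pose $i$. In the "virtual large array" (VLA) each pose has its own unknown time offset $\tau_i$; in the "real large array" (RLA) all poses share a single unknown time offset $\tau$. $\mathrm{j}$ is the imaginary unit, $^{*}$ complex conjugation, $\Re$ the real part, $\operatorname{tr}$ the trace. *)

theory Defs
  imports Complex_Main "Jordan_Normal_Form.Gauss_Jordan_Elimination" "Jordan_Normal_Form.Determinant"
begin

definition mtrace :: "real mat \<Rightarrow> real" where
  "mtrace A = (\<Sum>k<dim_row A. A $$ (k, k))"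

definition vnorm :: "real Matrix.vec \<Rightarrow> real" where
  "vnorm v = sqrt (v \<bullet> v)"

definition partial_deriv :: "((nat \<Rightarrow> real) \<Rightarrow> complex) \<Rightarrow> (nat \<Rightarrow> real) \<Rightarrow> nat \<Rightarrow> complex" where
  "partial_deriv f e s = (SOME D. ((\<lambda>x. f (e(s := x))) has_vector_derivative D) (at (e s)))"

(* subcarrier frequencies f_1..f_N = df * (-N/2, ..., -1, 1, ..., N/2) *)
definition freq :: "real \<Rightarrow> nat \<Rightarrow> nat \<Rightarrow> real" where
  "freq df N n = (if n \<le> N div 2 then df * (real n - real (N div 2) - 1)
                  else df * (real n - real (N div 2)))"

definition mu :: "real \<Rightarrow> real \<Rightarrow> real \<Rightarrow> nat \<Rightarrow> (nat \<Rightarrow> real Matrix.vec) \<Rightarrow>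
    (nat \<Rightarrow> real mat) \<Rightarrow> (nat \<Rightarrow> real Matrix.vec) \<Rightarrow>
    real Matrix.vec \<Rightarrow> real \<Rightarrow> real \<Rightarrow> real \<Rightarrow> nat \<Rightarrow> nat \<Rightarrow> nat \<Rightarrow> complex" where
  "mu lam c df N q Om del p t g b i m n =
     complex_of_real g * exp (\<i> * complex_of_real b)
     * exp (\<i> * complex_of_real (2 * pi / lam *
              (((p - del i) \<bullet> (Om i *\<^sub>v q m)) / vnorm (p - del i))))
     * exp (- \<i> * complex_of_real (2 * pi * freq df N n * (vnorm (p - del i) / c - t)))"

definition pos_of :: "(nat \<Rightarrow> real) \<Rightarrow> real Matrix.vec" where
  "pos_of e = vec 3 e"

(* VLA parameter layout (poses i = 1..I):
   e 0,e 1,e 2 = p; e (2+i) = tau_i; e (1+I+2i) = gamma_i; e (2+I+2i) = beta_i; length 3+3I *)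
definition mu_VLA where
  "mu_VLA lam c df N q Om del I e i m n =
     mu lam c df N q Om del (pos_of e) (e (2+i)) (e (1+I+2*i)) (e (2+I+2*i)) i m n"

(* RLA parameter layout:
   e 0,e 1,e 2 = p; e 3 = tau; e (2+2i) = gamma_i; e (3+2i) = beta_i; length 4+2I *)
definition mu_RLA where
  "mu_RLA lam c df N q Om del I e i m n =
     mu lam c df N q Om del (pos_of e) (e 3) (e (2+2*i)) (e (3+2*i)) i m n"

definition FIM :: "real \<Rightarrow> nat \<Rightarrow> nat \<Rightarrow> nat \<Rightarrow> nat \<Rightarrow>
    ((nat \<Rightarrow> real) \<Rightarrow> nat \<Rightarrow> nat \<Rightarrow> nat \<Rightarrow> complex) \<Rightarrow> (nat \<Rightarrow> real) \<Rightarrow> real mat" where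
  "FIM sigma I M N d muf e0 = mat d d (\<lambda>(s, s').
     2 / sigma\<^sup>2 * Re (\<Sum>i\<in>{1..I}. \<Sum>n\<in>{1..N}. \<Sum>m\<in>{1..M}.
        cnj (partial_deriv (\<lambda>e. muf e i m n) e0 s) * partial_deriv (\<lambda>e. muf e i m n) e0 s'))"

definition EFIM3 :: "real mat \<Rightarrow> real mat" where
  "EFIM3 J = (case split_block J 3 3 of (Jpp, Jpe, Jep, Jee) \<Rightarrow>
      Jpp - Jpe * the (mat_inverse Jee) * Jep)"

definition VLA_param :: "nat \<Rightarrow> real Matrix.vec \<Rightarrow> (nat \<Rightarrow> real) \<Rightarrow> (nat \<Rightarrow> real) \<Rightarrow> (nat \<Rightarrow> real) \<Rightarrow> nat \<Rightarrow> real" where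
  "VLA_param I p tau g b k =
     (if k < 3 then p $ k
      else if k < 3 + I then tau (k - 2)
      else if even (k - (3 + I)) then g ((k - (3 + I)) div 2 + 1)
      else b ((k - (3 + I)) div 2 + 1))"

definition RLA_param :: "nat \<Rightarrow> real Matrix.vec \<Rightarrow> real \<Rightarrow> (nat \<Rightarrow> real) \<Rightarrow> (nat \<Rightarrow> real) \<Rightarrow> nat \<Rightarrow> real" where
  "RLA_param I p tau g b k =
     (if k < 3 then p $ k
      else if k = 3 then tau
      else if even (k - 4) then g ((k - 4) div 2 + 1)
      else b ((k - 4) div 2 + 1))"

end

theory Submission
  imports Defs
begin

(* Every mean is gamma_i times a unit phasor exp(j Theta), so every score is
   (d gamma + j gamma d Theta) exp(j Theta), and a Fisher entry is a sum of products of real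
   derivatives of the phase Theta.  The subcarrier frequencies are symmetric about zero, so the
   cross terms between a clock offset and a phase vanish and the nuisance block of the Fisher matrix
   is diagonal in both models: the Schur complement subtracts one rank-one term per nuisance
   parameter.  The position block and the phase terms are the same for VLA and RLA; only the clock
   terms differ.  Separate clocks remove sum_i gamma_i^2 u_i u_i^T, one shared clock removes
   (sum_i gamma_i^2 u_i) (sum_i gamma_i^2 u_i)^T / sum_i gamma_i^2.  The difference is a weighted
   covariance of the directions u_i, which Lagrange's identity writes as the sum over pairs; the
   trace then follows from |u_i - u_j|^2 = 2 (1 - cos rho_ij). *)

section \<open>Derivatives along one coordinate\<close>

lemma has_vector_derivative_complex_unique:
  fixes f :: "real \<Rightarrow> complex"
  assumes "(f has_vector_derivative D) (at x)" and "(f has_vector_derivative D') (at x)"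
  shows "D' = D"
proof -
  from assms have "Re D' = Re D" "Im D' = Im D"
    unfolding has_vector_derivative_complex_iff using DERIV_unique by blast+
  then show ?thesis by (simp add: complex_eqI)
qed

lemma partial_deriv_eqI:
  assumes "((\<lambda>x. f (e(s := x))) has_vector_derivative D) (at (e s))"
  shows "partial_deriv f e s = D"
  unfolding partial_deriv_def
  by (rule has_vector_derivative_complex_unique[OF assms
        someI[where P = "\<lambda>D. ((\<lambda>x. f (e(s := x))) has_vector_derivative D) (at (e s))", OF assms]])

lemma has_vector_derivative_polar:
  fixes G T :: "real \<Rightarrow> real"
  assumes "(G has_real_derivative G') (at x)" and "(T has_real_derivative T') (at x)"
  shows "((\<lambda>x. of_real (G x) * exp (\<i> * of_real (T x))) has_vector_derivative
     ((of_real G' + \<i> * of_real (G x * T')) * exp (\<i> * of_real (T x)))) (at x)"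
proof -
  have cis: "\<And>y. exp (\<i> * complex_of_real y) = Complex (cos y) (sin y)"
    by (simp add: exp_eq_polar cis.code)
  show ?thesis
    unfolding has_vector_derivative_complex_iff cis
    using assms by (auto intro!: derivative_eq_intros simp: algebra_simps)
qed

lemma Re_cnj_mult_polar:
  fixes a b a' b' \<theta> :: real
  shows "Re (cnj ((of_real a + \<i> * of_real b) * exp (\<i> * of_real \<theta>))
             * ((of_real a' + \<i> * of_real b') * exp (\<i> * of_real \<theta>))) = a * a' + b * b'"
proof -
  define z w e where "z = of_real a + \<i> * of_real b" and "w = of_real a' + \<i> * of_real b'"
    and "e = exp (\<i> * of_real \<theta>)"
  have "cnj e * e = 1"
    unfolding e_def by (simp add: exp_eq_polar cis.code complex_eq_iff)
  have "cnj (z * e) * (w * e) = cnj z * w * (cnj e * e)"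
    unfolding complex_cnj_mult by (simp only: ac_simps)
  also have "\<dots> = cnj z * w"
    using \<open>cnj e * e = 1\<close> by simp
  finally have phase_cancels: "cnj (z * e) * (w * e) = cnj z * w" .
  show ?thesis
    unfolding z_def[symmetric] w_def[symmetric] e_def[symmetric] phase_cancels
    unfolding z_def w_def by simp
qed

lemma has_real_derivative_fun_upd_minus:
  "((\<lambda>x. (e(s := x)) k - c) has_real_derivative of_bool (s = k)) (at y)"
  by (cases "s = k") (auto intro!: derivative_eq_intros)

lemma scalar_prod_vec_upd_minus:
  assumes "dim_vec d = n" and "dim_vec w = n"
  shows "(vec n (f(s := x)) - d) \<bullet> w = (\<Sum>k<n. ((f(s := x)) k - d $ k) * w $ k)"
  using assms unfolding scalar_prod_def by (auto simp: atLeast0LessThan intro!: sum.cong)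

lemma has_real_derivative_scalar_prod_vec_upd:
  assumes "dim_vec d = n" and "dim_vec w = n" and "s < n"
  shows "((\<lambda>x. (vec n (f(s := x)) - d) \<bullet> w) has_real_derivative w $ s) (at x)"
proof -
  have "((\<lambda>x. \<Sum>k<n. ((f(s := x)) k - d $ k) * w $ k) has_real_derivative
      (\<Sum>k<n. of_bool (s = k) * w $ k)) (at x)"
    by (intro DERIV_sum DERIV_cmult_right has_real_derivative_fun_upd_minus)
  also have "(\<Sum>k<n. of_bool (s = k) * w $ k) = w $ s"
    using assms(3) by (simp add: of_bool_def if_distrib[of "\<lambda>x. x * _"] sum.delta cong: if_cong)
  finally show ?thesis
    unfolding scalar_prod_vec_upd_minus[OF assms(1,2)] .
qed

lemma minus_vec_eq_zero_iff:
  fixes u v :: "'a :: ab_group_add Matrix.vec"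
  assumes "u \<in> carrier_vec n" and "v \<in> carrier_vec n"
  shows "u - v = 0\<^sub>v n \<longleftrightarrow> u = v"
proof
  assume diff: "u - v = 0\<^sub>v n"
  have "u $ i = v $ i" if "i < n" for i
  proof -
    have "(u - v) $ i = 0" using diff that by simp
    then show ?thesis using assms that by simp
  qed
  then show "u = v"
    using assms by (intro eq_vecI) auto
qed (use assms in simp)

lemma scalar_prod_self_pos:
  fixes v :: "real Matrix.vec"
  assumes "v \<in> carrier_vec n" and "v \<noteq> 0\<^sub>v n"
  shows "v \<bullet> v > 0"
  using conjugate_square_greater_0_vec[OF assms(1)] assms(2) by simp

lemma has_real_derivative_vnorm_vec_upd:
  assumes d: "d \<in> carrier_vec n" and s: "s < n" and ne: "vec n (f(s := x)) \<noteq> d"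
  defines "v \<equiv> \<lambda>x. vec n (f(s := x)) - d"
  shows "((\<lambda>x. vnorm (v x)) has_real_derivative v x $ s / vnorm (v x)) (at x)"
proof -
  have vv: "v y \<bullet> v y = (\<Sum>k<n. ((f(s := y)) k - d $ k)^2)" for y
    using d unfolding v_def scalar_prod_def
    by (auto simp: power2_eq_square atLeast0LessThan intro!: sum.cong)
  have pos: "v x \<bullet> v x > 0"
    using d ne by (intro scalar_prod_self_pos[of _ n]) (auto simp: v_def minus_vec_eq_zero_iff)
  have "((\<lambda>y. v y \<bullet> v y) has_real_derivative (\<Sum>k<n. 2 * ((f(s := x)) k - d $ k) * of_bool (s = k))) (at x)"
  proof -
    have "((\<lambda>y. ((f(s := y)) k - d $ k)^2) has_real_derivative
        2 * ((f(s := x)) k - d $ k) * of_bool (s = k)) (at x)" for k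
      using DERIV_power[OF has_real_derivative_fun_upd_minus, where n = 2]
      by (rule DERIV_cong) (simp add: mult_ac)
    then show ?thesis
      unfolding vv by (intro DERIV_sum)
  qed
  also have "(\<Sum>k<n. 2 * ((f(s := x)) k - d $ k) * of_bool (s = k)) = 2 * v x $ s"
    using s d unfolding v_def by (simp add: of_bool_def if_distrib[of "\<lambda>x. _ * x"] sum.delta cong: if_cong)
  finally have "((\<lambda>y. sqrt (v y \<bullet> v y)) has_real_derivative
      inverse (sqrt (v x \<bullet> v x)) / 2 * (2 * v x $ s)) (at x)"
    using pos by (intro DERIV_chain2[OF DERIV_real_sqrt]) auto
  then show ?thesis
    unfolding vnorm_def by (simp add: field_simps)
qed

section \<open>Finite sums\<close>

lemma sum_of_nat_sq_Icc_real: "(\<Sum>n\<in>{1..K}. (real n)^2) = real K * (real K + 1) * (2 * real K + 1) / 6"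
  by (induction K) (auto simp: field_simps power2_eq_square)

lemma sum_freq_symmetric:
  assumes "even N"
  shows "(\<Sum>n\<in>{1..N}. h (freq df N n)) = (\<Sum>k\<in>{1..N div 2}. h (- df * real k) + h (df * real k))"
proof -
  define K where "K = N div 2"
  have N: "N = K + K" using assms unfolding K_def by auto
  have "(\<Sum>n\<in>{1..N}. h (freq df N n))
      = (\<Sum>n\<in>{1..K}. h (freq df N n)) + (\<Sum>n\<in>{K+1..K+K}. h (freq df N n))"
  proof -
    have "{1..N} = {1..K} \<union> {K+1..K+K}" unfolding N by auto
    then show ?thesis by (simp add: sum.union_disjoint)
  qed
  also have "(\<Sum>n\<in>{1..K}. h (freq df N n)) = (\<Sum>k\<in>{1..K}. h (freq df N (K + 1 - k)))"
    by (subst sum.atLeastAtMost_rev) simp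
  also have "\<dots> = (\<Sum>k\<in>{1..K}. h (- df * real k))"
    by (intro sum.cong) (auto simp: freq_def K_def[symmetric] of_nat_diff algebra_simps)
  also have "(\<Sum>n\<in>{K+1..K+K}. h (freq df N n)) = (\<Sum>k\<in>{1..K}. h (freq df N (k + K)))"
    using sum.shift_bounds_cl_nat_ivl[of "\<lambda>n. h (freq df N n)" 1 K K] by (simp add: add.commute)
  also have "\<dots> = (\<Sum>k\<in>{1..K}. h (df * real k))"
    by (intro sum.cong) (auto simp: freq_def K_def[symmetric])
  finally show ?thesis
    unfolding K_def by (simp add: sum.distrib)
qed

lemma sum_freq:
  assumes "even N"
  shows "(\<Sum>n\<in>{1..N}. freq df N n) = 0"
  using sum_freq_symmetric[OF assms, of "\<lambda>x. x"] by simp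

lemma sum_freq_sq:
  assumes "even N"
  shows "(\<Sum>n\<in>{1..N}. (freq df N n)^2) = df^2 * real N * (real N + 1) * (real N + 2) / 12"
proof -
  obtain K where N: "N = 2 * K" using assms by blast
  have "(\<Sum>n\<in>{1..N}. (freq df N n)^2) = 2 * df^2 * (\<Sum>k\<in>{1..K}. (real k)^2)"
    using sum_freq_symmetric[OF assms, of "\<lambda>x. x^2"]
    by (simp add: N power_mult_distrib sum_distrib_left mult.assoc)
  then show ?thesis
    unfolding sum_of_nat_sq_Icc_real N by (simp add: field_simps)
qed

lemma sum_sum_mult_affine_centered:
  fixes x :: "'b \<Rightarrow> real" and w :: "'a \<Rightarrow> real"
  assumes "finite A" and "finite B" and "(\<Sum>n\<in>A. w n) = 0"
  shows "(\<Sum>n\<in>A. \<Sum>m\<in>B. (x m + w n * y) * (z + w n * t))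
     = real (card A) * z * (\<Sum>m\<in>B. x m) + real (card B) * y * t * (\<Sum>n\<in>A. (w n)^2)"
proof -
  have "(\<Sum>m\<in>B. (x m + w n * y) * (z + w n * t))
      = z * (\<Sum>m\<in>B. x m) + w n * (t * (\<Sum>m\<in>B. x m) + real (card B) * y * z)
        + (w n)^2 * (real (card B) * y * t)" for n
    by (simp add: algebra_simps sum.distrib sum_distrib_left[symmetric] sum_distrib_right[symmetric]
        power2_eq_square)
  then have "(\<Sum>n\<in>A. \<Sum>m\<in>B. (x m + w n * y) * (z + w n * t))
      = real (card A) * z * (\<Sum>m\<in>B. x m) + (\<Sum>n\<in>A. w n) * (t * (\<Sum>m\<in>B. x m) + real (card B) * y * z)
        + (\<Sum>n\<in>A. (w n)^2) * (real (card B) * y * t)"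
    by (simp add: sum.distrib sum_distrib_right[symmetric])
  then show ?thesis
    using assms(3) by simp
qed

lemma lagrange_identity_weighted_upto:
  fixes w x y :: "nat \<Rightarrow> real"
  shows "(\<Sum>i\<in>{1..n}. \<Sum>j\<in>{i+1..n}. w i * w j * (x i - x j) * (y i - y j)) =
    (\<Sum>i\<in>{1..n}. w i) * (\<Sum>i\<in>{1..n}. w i * x i * y i)
    - (\<Sum>i\<in>{1..n}. w i * x i) * (\<Sum>i\<in>{1..n}. w i * y i)"
proof (induction n)
  case 0
  then show ?case by simp
next
  case (Suc n)
  have "(\<Sum>i\<in>{1..Suc n}. \<Sum>j\<in>{i+1..Suc n}. w i * w j * (x i - x j) * (y i - y j))
     = (\<Sum>i\<in>{1..n}. (\<Sum>j\<in>{i+1..n}. w i * w j * (x i - x j) * (y i - y j))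
       + w i * w (Suc n) * (x i - x (Suc n)) * (y i - y (Suc n)))"
    by (simp add: sum.cl_ivl_Suc)
  also have "\<dots> = (\<Sum>i\<in>{1..n}. \<Sum>j\<in>{i+1..n}. w i * w j * (x i - x j) * (y i - y j))
       + w (Suc n) * ((\<Sum>i\<in>{1..n}. w i * x i * y i) - y (Suc n) * (\<Sum>i\<in>{1..n}. w i * x i)
           - x (Suc n) * (\<Sum>i\<in>{1..n}. w i * y i) + x (Suc n) * y (Suc n) * (\<Sum>i\<in>{1..n}. w i))"
    by (simp add: sum.distrib sum_subtractf sum_distrib_left algebra_simps)
  finally show ?case
    unfolding Suc.IH by (simp add: sum.cl_ivl_Suc algebra_simps)
qed

lemma lagrange_identity_weighted:
  fixes w x y :: "nat \<Rightarrow> real"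
  shows "(\<Sum>i\<in>{1..n-1}. \<Sum>j\<in>{i+1..n}. w i * w j * (x i - x j) * (y i - y j)) =
    (\<Sum>i\<in>{1..n}. w i) * (\<Sum>i\<in>{1..n}. w i * x i * y i)
    - (\<Sum>i\<in>{1..n}. w i * x i) * (\<Sum>i\<in>{1..n}. w i * y i)"
  using lagrange_identity_weighted_upto[of w x y n] by (cases n) (simp_all add: sum.cl_ivl_Suc)

lemma sum_sq_diff_normalized:
  fixes P Q :: "real vec"
  assumes P: "P \<in> carrier_vec n" "P \<noteq> 0\<^sub>v n" and Q: "Q \<in> carrier_vec n" "Q \<noteq> 0\<^sub>v n"
  shows "(\<Sum>k<n. (P $ k / vnorm P - Q $ k / vnorm Q)^2)
    = 2 * (1 - cos (arccos ((P \<bullet> Q) / (vnorm P * vnorm Q))))"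
proof -
  define a where "a k = P $ k / vnorm P" for k
  define b where "b k = Q $ k / vnorm Q" for k
  define x where "x = (P \<bullet> Q) / (vnorm P * vnorm Q)"
  have sprod: "U \<bullet> V = (\<Sum>k<n. U $ k * V $ k)" if "V \<in> carrier_vec n" for U V :: "real vec"
    using that unfolding scalar_prod_def by (simp add: atLeast0LessThan)
  have "P \<bullet> P > 0" "Q \<bullet> Q > 0"
    using scalar_prod_self_pos P Q by blast+
  then have "(\<Sum>k<n. (a k)^2) = 1" "(\<Sum>k<n. (b k)^2) = 1"
    using sprod[OF P(1), of P] sprod[OF Q(1), of Q]
    by (simp_all add: a_def b_def vnorm_def power_divide sum_divide_distrib[symmetric] power2_eq_square)
  moreover have "(\<Sum>k<n. a k * b k) = x"
    unfolding a_def b_def x_def sprod[OF Q(1)] by (simp add: sum_divide_distrib[symmetric])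
  ultimately have plus: "(\<Sum>k<n. (a k + b k)^2) = 2 + 2 * x"
    and minus: "(\<Sum>k<n. (a k - b k)^2) = 2 - 2 * x"
    by (simp_all add: power2_sum power2_diff sum.distrib sum_subtractf mult.assoc
        sum_distrib_left[symmetric])
  have "(\<Sum>k<n. (a k + b k)^2) \<ge> 0" "(\<Sum>k<n. (a k - b k)^2) \<ge> 0"
    by (simp_all add: sum_nonneg)
  then have "cos (arccos x) = x"
    using plus minus by (intro cos_arccos) linarith+
  then show ?thesis
    using minus unfolding a_def b_def x_def by simp
qed

section \<open>Schur complements with a diagonal nuisance block\<close>

lemma mat_inverse_eq_SomeI:
  fixes A B :: "'a :: field mat"
  assumes A: "A \<in> carrier_mat n n" and B: "B \<in> carrier_mat n n"
    and AB: "A * B = 1\<^sub>m n" and BA: "B * A = 1\<^sub>m n"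
  shows "mat_inverse A = Some B"
proof (cases "mat_inverse A")
  case None
  from mat_inverse(1)[OF A None, of "()"] have "A \<notin> Units (ring_mat TYPE('a) n ())" .
  moreover have "A \<in> Units (ring_mat TYPE('a) n ())"
    unfolding Units_def ring_mat_def using A B AB BA by auto
  ultimately show ?thesis by blast
next
  case (Some B')
  from mat_inverse(2)[OF A Some] have B': "B' * A = 1\<^sub>m n" "B' \<in> carrier_mat n n" by auto
  have "B' = B' * (A * B)" using B'(2) by (simp add: AB)
  also have "\<dots> = (B' * A) * B" by (rule assoc_mult_mat[OF B'(2) A B, symmetric])
  also have "\<dots> = B" unfolding B'(1) using B by simp
  finally show ?thesis using Some by simp
qed

lemma mat_inverse_diagonal:
  fixes D :: "'a :: field mat"
  assumes D: "D \<in> carrier_mat n n"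
    and off: "\<And>i j. i < n \<Longrightarrow> j < n \<Longrightarrow> i \<noteq> j \<Longrightarrow> D $$ (i, j) = 0"
    and diag: "\<And>i. i < n \<Longrightarrow> D $$ (i, i) \<noteq> 0"
  shows "mat_inverse D = Some (mat n n (\<lambda>(i, j). if i = j then 1 / D $$ (i, i) else 0))"
proof (rule mat_inverse_eq_SomeI[OF D])
  let ?E = "mat n n (\<lambda>(i, j). if i = j then 1 / D $$ (i, i) else 0)"
  have entry: "D $$ (i, j) = (if i = j then D $$ (i, i) else 0)" if "i < n" "j < n" for i j
    using off that by auto
  show "D * ?E = 1\<^sub>m n"
  proof (rule eq_matI)
    fix i j assume "i < dim_row (1\<^sub>m n :: 'a mat)" "j < dim_col (1\<^sub>m n :: 'a mat)"
    then have ij: "i < n" "j < n" by auto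
    have "(D * ?E) $$ (i, j) = (\<Sum>k\<in>{0..<n}. D $$ (i, k) * (if k = j then 1 / D $$ (j, j) else 0))"
      using D ij by (auto simp: scalar_prod_def intro!: sum.cong)
    also have "\<dots> = 1\<^sub>m n $$ (i, j)"
      using ij diag entry[OF ij] by (simp add: if_distrib[of "\<lambda>x. _ * x"] sum.delta cong: if_cong)
    finally show "(D * ?E) $$ (i, j) = 1\<^sub>m n $$ (i, j)" .
  qed (use D in auto)
  show "?E * D = 1\<^sub>m n"
  proof (rule eq_matI)
    fix i j assume "i < dim_row (1\<^sub>m n :: 'a mat)" "j < dim_col (1\<^sub>m n :: 'a mat)"
    then have ij: "i < n" "j < n" by auto
    have "(?E * D) $$ (i, j) = (\<Sum>k\<in>{0..<n}. (if i = k then 1 / D $$ (i, i) else 0) * D $$ (k, j))"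
      using D ij by (auto simp: scalar_prod_def intro!: sum.cong)
    also have "\<dots> = 1\<^sub>m n $$ (i, j)"
      using ij diag entry[OF ij] by (simp add: if_distrib[of "\<lambda>x. x * _"] sum.delta cong: if_cong)
    finally show "(?E * D) $$ (i, j) = 1\<^sub>m n $$ (i, j)" .
  qed (use D in auto)
qed auto

lemma EFIM3_diagonal_nuisance:
  fixes J :: "real mat"
  assumes J: "J \<in> carrier_mat d d" and d: "3 \<le> d"
    and off: "\<And>s s'. s \<in> {3..<d} \<Longrightarrow> s' \<in> {3..<d} \<Longrightarrow> s \<noteq> s'
      \<Longrightarrow> J $$ (s, s') = 0"
    and diag: "\<And>s. s \<in> {3..<d} \<Longrightarrow> J $$ (s, s) \<noteq> 0"
  shows "EFIM3 J \<in> carrier_mat 3 3"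
    and "a < 3 \<Longrightarrow> a' < 3 \<Longrightarrow> EFIM3 J $$ (a, a') =
       J $$ (a, a') - (\<Sum>s\<in>{3..<d}. J $$ (a, s) * J $$ (s, a') / J $$ (s, s))"
proof -
  define n where "n = d - 3"
  define Jpp where "Jpp = mat 3 3 (\<lambda>ij. J $$ ij)"
  define Jpe where "Jpe = mat 3 n (\<lambda>(i, j). J $$ (i, j + 3))"
  define Jep where "Jep = mat n 3 (\<lambda>(i, j). J $$ (i + 3, j))"
  define Jee where "Jee = mat n n (\<lambda>(i, j). J $$ (i + 3, j + 3))"
  define Di where "Di = mat n n (\<lambda>(i, j). if i = j then 1 / J $$ (i + 3, i + 3) else 0)"
  have "split_block J 3 3 = (Jpp, Jpe, Jep, Jee)"
    unfolding split_block_def Let_def Jpp_def Jpe_def Jep_def Jee_def n_def using J by auto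
  moreover have "mat_inverse Jee = Some Di"
    unfolding Di_def using mat_inverse_diagonal[of Jee n] off diag
    by (auto simp: Jee_def n_def)
  ultimately have E: "EFIM3 J = Jpp - Jpe * Di * Jep"
    unfolding EFIM3_def by simp
  show "EFIM3 J \<in> carrier_mat 3 3"
    unfolding E Jpp_def Jpe_def Di_def Jep_def by auto
  assume a: "a < 3" "a' < 3"
  have "(Jpe * Di) $$ (a, k) = J $$ (a, k + 3) / J $$ (k + 3, k + 3)" if k: "k < n" for k
  proof -
    have "(Jpe * Di) $$ (a, k) = (\<Sum>j\<in>{0..<n}. J $$ (a, j + 3) * (if j = k then 1 / J $$ (k + 3, k + 3) else 0))"
      using a k unfolding Jpe_def Di_def by (auto simp: scalar_prod_def intro!: sum.cong)
    then show ?thesis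
      using k by (simp add: if_distrib[of "\<lambda>x. _ * x"] sum.delta cong: if_cong)
  qed
  then have "(Jpe * Di * Jep) $$ (a, a') = (\<Sum>k\<in>{0..<n}. J $$ (a, k + 3) * J $$ (k + 3, a') / J $$ (k + 3, k + 3))"
    using a unfolding Jep_def by (auto simp: scalar_prod_def Jpe_def Di_def intro!: sum.cong)
  also have "\<dots> = (\<Sum>s\<in>{3..<d}. J $$ (a, s) * J $$ (s, a') / J $$ (s, s))"
    using sum.shift_bounds_nat_ivl[of "\<lambda>s. J $$ (a, s) * J $$ (s, a') / J $$ (s, s)" 0 3 n] d
    unfolding n_def by simp
  finally show "EFIM3 J $$ (a, a') = J $$ (a, a') - (\<Sum>s\<in>{3..<d}. J $$ (a, s) * J $$ (s, a') / J $$ (s, s))"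
    unfolding E using a by (simp add: Jpp_def Jpe_def Di_def Jep_def)
qed

lemma mtrace_mat_sum_outer:
  fixes z :: "'i \<Rightarrow> 'j \<Rightarrow> real"
  shows "mtrace (mat n n (\<lambda>(a, a'). \<Sum>i\<in>A. \<Sum>j\<in>B i. z i j * x i j a * x i j a'))
    = (\<Sum>i\<in>A. \<Sum>j\<in>B i. z i j * (\<Sum>k<n. (x i j k)^2))"
  unfolding mtrace_def
  by (simp add: sum.swap[of _ "{..<n}"] sum_distrib_left power2_eq_square mult.assoc)

section \<open>Fisher information of the multi-pose model\<close>

locale multipose_model =
  fixes I M N :: nat and lam c df sigma :: real
    and q :: "nat \<Rightarrow> real Matrix.vec" and Om :: "nat \<Rightarrow> real mat"
    and del :: "nat \<Rightarrow> real Matrix.vec" and p :: "real Matrix.vec" and g :: "nat \<Rightarrow> real"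
  assumes M_pos: "M > 0" and N_pos: "N > 0" and N_even: "even N"
    and df_nz: "df \<noteq> 0" and sigma_nz: "sigma \<noteq> 0"
    and Om_dim: "\<And>i. i \<in> {1..I} \<Longrightarrow> Om i \<in> carrier_mat 3 3"
    and del_dim: "\<And>i. i \<in> {1..I} \<Longrightarrow> del i \<in> carrier_vec 3"
    and p_dim: "p \<in> carrier_vec 3"
    and p_ne_del: "\<And>i. i \<in> {1..I} \<Longrightarrow> p \<noteq> del i"
    and g_nz: "\<And>i. i \<in> {1..I} \<Longrightarrow> g i \<noteq> 0"
begin

definition omega :: "nat \<Rightarrow> real" where
  "omega n = 2 * pi * freq df N n"

definition omega_sq_sum :: real where
  "omega_sq_sum = (\<Sum>n\<in>{1..N}. (omega n)^2)"

definition phase :: "real Matrix.vec \<Rightarrow> real \<Rightarrow> real \<Rightarrow> nat \<Rightarrow> nat \<Rightarrow> nat \<Rightarrow> real" where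
  "phase P t b i m n = b + 2 * pi / lam * (((P - del i) \<bullet> (Om i *\<^sub>v q m)) / vnorm (P - del i))
     - omega n * (vnorm (P - del i) / c - t)"

definition unit_dir :: "nat \<Rightarrow> nat \<Rightarrow> real" where
  "unit_dir i a = (p - del i) $ a / vnorm (p - del i)"

(* Derivative of the array-response part of the phase; its form is irrelevant, since it enters both
   models in the same way. *)
definition steering_deriv :: "nat \<Rightarrow> nat \<Rightarrow> nat \<Rightarrow> real" where
  "steering_deriv i m a = 2 * pi / lam *
     (((Om i *\<^sub>v q m) $ a * vnorm (p - del i) - ((p - del i) \<bullet> (Om i *\<^sub>v q m)) * unit_dir i a)
      / (vnorm (p - del i) * vnorm (p - del i)))"

definition position_phase_deriv :: "nat \<Rightarrow> nat \<Rightarrow> nat \<Rightarrow> nat \<Rightarrow> real" where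
  "position_phase_deriv i m n a = steering_deriv i m a - omega n / c * unit_dir i a"

definition position_info :: "nat \<Rightarrow> nat \<Rightarrow> real" where
  "position_info a a' = 2 / sigma^2 * (\<Sum>i\<in>{1..I}. \<Sum>n\<in>{1..N}. \<Sum>m\<in>{1..M}.
     (g i)^2 * position_phase_deriv i m n a * position_phase_deriv i m n a')"

definition steering_sum :: "nat \<Rightarrow> nat \<Rightarrow> real" where
  "steering_sum i a = (\<Sum>m\<in>{1..M}. steering_deriv i m a)"

definition phase_info_loss :: "nat \<Rightarrow> nat \<Rightarrow> nat \<Rightarrow> real" where
  "phase_info_loss i a a' = 2 / sigma^2 * (g i)^2 * real N * steering_sum i a * steering_sum i a' / real M"

definition delay_scale :: real where
  "delay_scale = 2 * real M * omega_sq_sum / (sigma^2 * c^2)"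

definition delay_weight :: "(nat \<Rightarrow> nat) \<Rightarrow> nat \<Rightarrow> real" where
  "delay_weight kt s = (\<Sum>i | i \<in> {1..I} \<and> kt i = s. (g i)^2)"

definition delay_moment :: "(nat \<Rightarrow> nat) \<Rightarrow> nat \<Rightarrow> nat \<Rightarrow> real" where
  "delay_moment kt s a = (\<Sum>i | i \<in> {1..I} \<and> kt i = s. (g i)^2 * unit_dir i a)"

definition delay_info :: "(nat \<Rightarrow> nat) \<Rightarrow> nat \<Rightarrow> nat \<Rightarrow> real" where
  "delay_info kt a a' = (\<Sum>s\<in>kt ` {1..I}.
     delay_scale * delay_moment kt s a * delay_moment kt s a' / delay_weight kt s)"

lemma mu_eq_polar:
  "mu lam c df N q Om del P t gg b i m n = of_real gg * exp (\<i> * of_real (phase P t b i m n))"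
proof -
  have "exp (\<i> * of_real (phase P t b i m n)) =
     exp (\<i> * of_real b) * exp (\<i> * of_real (2 * pi / lam *
              (((P - del i) \<bullet> (Om i *\<^sub>v q m)) / vnorm (P - del i))))
     * exp (- \<i> * of_real (2 * pi * freq df N n * (vnorm (P - del i) / c - t)))"
    unfolding phase_def omega_def by (simp add: exp_add[symmetric] exp_diff[symmetric] algebra_simps)
  then show ?thesis
    unfolding mu_def by simp
qed

lemma sum_omega: "(\<Sum>n\<in>{1..N}. omega n) = 0"
  unfolding omega_def using sum_freq[OF N_even] by (simp add: sum_distrib_left[symmetric])

lemma omega_sq_sum_eq: "omega_sq_sum = pi^2 * df^2 * real N * (real N + 1) * (real N + 2) / 3"
proof -
  have "omega_sq_sum = 4 * pi^2 * (\<Sum>n\<in>{1..N}. (freq df N n)^2)"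
    unfolding omega_sq_sum_def omega_def by (simp add: power_mult_distrib sum_distrib_left)
  then show ?thesis
    unfolding sum_freq_sq[OF N_even] by simp
qed

lemma omega_sq_sum_pos: "omega_sq_sum > 0"
  unfolding omega_sq_sum_eq using N_pos df_nz by simp

lemma has_real_derivative_steering:
  assumes i: "i \<in> {1..I}" and a: "a < 3" and e0: "vec 3 e0 = p"
  defines "P \<equiv> \<lambda>x. vec 3 (e0(a := x))"
  shows "((\<lambda>x. 2 * pi / lam * (((P x - del i) \<bullet> (Om i *\<^sub>v q m)) / vnorm (P x - del i)))
      has_real_derivative steering_deriv i m a) (at (e0 a))"
    and "((\<lambda>x. vnorm (P x - del i)) has_real_derivative unit_dir i a) (at (e0 a))"
proof -
  define w where "w = Om i *\<^sub>v q m"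
  have upd: "P (e0 a) = p" using e0 unfolding P_def by simp
  have nz: "vnorm (p - del i) \<noteq> 0"
    using scalar_prod_self_pos[of "p - del i" 3] p_ne_del[OF i] p_dim del_dim[OF i]
    unfolding vnorm_def by (auto simp: minus_vec_eq_zero_iff)
  show norm: "((\<lambda>x. vnorm (P x - del i)) has_real_derivative unit_dir i a) (at (e0 a))"
    using has_real_derivative_vnorm_vec_upd[OF del_dim[OF i] a, of e0 "e0 a"] p_ne_del[OF i] upd
    unfolding P_def unit_dir_def by simp
  have "dim_vec w = 3" using Om_dim[OF i] unfolding w_def by simp
  from has_real_derivative_scalar_prod_vec_upd[OF _ this a, of "del i" e0 "e0 a"]
  have "((\<lambda>x. (P x - del i) \<bullet> w) has_real_derivative w $ a) (at (e0 a))"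
    using del_dim[OF i] unfolding P_def by simp
  from DERIV_cmult[OF DERIV_divide[OF this norm], of "2 * pi / lam"]
  show "((\<lambda>x. 2 * pi / lam * (((P x - del i) \<bullet> (Om i *\<^sub>v q m)) / vnorm (P x - del i)))
      has_real_derivative steering_deriv i m a) (at (e0 a))"
    using nz upd unfolding steering_deriv_def w_def by simp
qed

lemma delay_weight_eq: "delay_weight kt s = (\<Sum>i\<in>{1..I}. if kt i = s then (g i)^2 else 0)"
  unfolding delay_weight_def by (rule sum.inter_filter) simp

lemma delay_moment_eq:
  "delay_moment kt s a = (\<Sum>i\<in>{1..I}. if kt i = s then (g i)^2 * unit_dir i a else 0)"
  unfolding delay_moment_def by (rule sum.inter_filter) simp

lemma delay_weight_pos:
  assumes "s \<in> kt ` {1..I}"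
  shows "delay_weight kt s > 0"
proof -
  obtain i0 where i0: "i0 \<in> {1..I}" "kt i0 = s" using assms by blast
  have "(\<Sum>i | i \<in> {1..I} \<and> kt i = s. (g i)^2) > 0"
    using i0 g_nz by (intro sum_pos2[of _ i0]) auto
  then show ?thesis
    unfolding delay_weight_def .
qed

lemma delay_info_inj:
  assumes "inj_on kt {1..I}"
  shows "delay_info kt a a' = delay_scale * (\<Sum>i\<in>{1..I}. (g i)^2 * unit_dir i a * unit_dir i a')"
proof -
  have group: "{j. j \<in> {1..I} \<and> kt j = kt i} = {i}" if "i \<in> {1..I}" for i
    using assms that unfolding inj_on_def by blast
  have "delay_scale * delay_moment kt (kt i) a * delay_moment kt (kt i) a' / delay_weight kt (kt i)
      = delay_scale * ((g i)^2 * unit_dir i a * unit_dir i a')" if "i \<in> {1..I}" for i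
    using g_nz[OF that] unfolding delay_moment_def delay_weight_def group[OF that]
    by (simp add: field_simps power2_eq_square)
  then show ?thesis
    unfolding delay_info_def sum.reindex[OF assms] sum_distrib_left by simp
qed

lemma delay_info_const:
  assumes "I > 0"
  shows "delay_info (\<lambda>i. s0) a a' = delay_scale * (\<Sum>i\<in>{1..I}. (g i)^2 * unit_dir i a)
    * (\<Sum>i\<in>{1..I}. (g i)^2 * unit_dir i a') / (\<Sum>i\<in>{1..I}. (g i)^2)"
proof -
  have "(\<lambda>i. s0) ` {1..I} = {s0}" using assms by (simp add: image_constant_conv)
  then show ?thesis
    unfolding delay_info_def delay_moment_def delay_weight_def by (simp del: atLeastAtMost_iff)
qed

end

(* k_delay i, k_gain i and k_phase i are the coordinates of tau, gamma_i and beta_i of pose i in the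
   parameter vector; poses with equal k_delay share one clock offset. *)
locale parameter_layout = multipose_model +
  fixes d :: nat and k_delay k_gain k_phase :: "nat \<Rightarrow> nat"
    and e0 :: "nat \<Rightarrow> real"
    and muf :: "(nat \<Rightarrow> real) \<Rightarrow> nat \<Rightarrow> nat \<Rightarrow> nat \<Rightarrow> complex"
  assumes d_ge_3: "3 \<le> d"
    and nuisance_indices: "{3..<d} = k_delay ` {1..I} \<union> k_phase ` {1..I} \<union> k_gain ` {1..I}"
    and delay_phase_disjoint: "k_delay ` {1..I} \<inter> k_phase ` {1..I} = {}"
    and delay_gain_disjoint: "k_delay ` {1..I} \<inter> k_gain ` {1..I} = {}"
    and phase_gain_disjoint: "k_phase ` {1..I} \<inter> k_gain ` {1..I} = {}"
    and inj_phase: "inj_on k_phase {1..I}"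
    and e0_position: "\<And>k. k < 3 \<Longrightarrow> e0 k = p $ k"
    and e0_gain: "\<And>i. i \<in> {1..I} \<Longrightarrow> e0 (k_gain i) = g i"
    and muf_eq: "\<And>e i m n. muf e i m n =
      mu lam c df N q Om del (pos_of e) (e (k_delay i)) (e (k_gain i)) (e (k_phase i)) i m n"
begin

abbreviation J :: "real mat" where
  "J \<equiv> FIM sigma I M N d muf e0"

definition phase_deriv :: "nat \<Rightarrow> nat \<Rightarrow> nat \<Rightarrow> nat \<Rightarrow> real" where
  "phase_deriv i m n s = (if s < 3 then position_phase_deriv i m n s else 0)
     + of_bool (s = k_phase i) + omega n * of_bool (s = k_delay i)"

lemma nuisance_index_bounds:
  assumes "i \<in> {1..I}"
  shows "k_delay i \<in> {3..<d}" and "k_phase i \<in> {3..<d}" and "k_gain i \<in> {3..<d}"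
  using assms nuisance_indices by blast+

lemma pos_of_e0: "pos_of e0 = p"
  using p_dim e0_position unfolding pos_of_def by (auto intro!: eq_vecI)

lemma has_real_derivative_phase:
  assumes i: "i \<in> {1..I}"
  shows "((\<lambda>x. phase (pos_of (e0(s := x))) ((e0(s := x)) (k_delay i)) ((e0(s := x)) (k_phase i)) i m n)
    has_real_derivative phase_deriv i m n s) (at (e0 s))"
proof (cases "s < 3")
  case True
  have ne: "s \<noteq> k_delay i" "s \<noteq> k_phase i"
    using True nuisance_index_bounds[OF i] by auto
  note steer = has_real_derivative_steering[OF i True pos_of_e0[unfolded pos_of_def]]
  have "((\<lambda>x. e0 (k_phase i) + 2 * pi / lam * (((vec 3 (e0(s := x)) - del i) \<bullet> (Om i *\<^sub>v q m))
        / vnorm (vec 3 (e0(s := x)) - del i)) - omega n * (vnorm (vec 3 (e0(s := x)) - del i) / c - e0 (k_delay i)))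
      has_real_derivative 0 + steering_deriv i m s - omega n * (unit_dir i s / c - 0)) (at (e0 s))"
    by (intro steer(1)[of m] steer(2) DERIV_diff DERIV_add DERIV_const DERIV_cmult DERIV_cdivide)
  then show ?thesis
    using True ne unfolding phase_def phase_deriv_def position_phase_deriv_def pos_of_def
    by (simp add: algebra_simps)
next
  case False
  have "pos_of (e0(s := x)) = p" for x
    using False pos_of_e0 unfolding pos_of_def by (auto intro!: eq_vecI)
  moreover have "((\<lambda>x. (e0(s := x)) (k_phase i)
        + 2 * pi / lam * (((p - del i) \<bullet> (Om i *\<^sub>v q m)) / vnorm (p - del i))
        - omega n * (vnorm (p - del i) / c - (e0(s := x)) (k_delay i)))
      has_real_derivative of_bool (s = k_phase i) + 0 - omega n * (0 - of_bool (s = k_delay i))) (at (e0 s))"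
  proof -
    have upd: "((\<lambda>x. (e0(s := x)) k) has_real_derivative of_bool (s = k)) (at (e0 s))" for k
      using has_real_derivative_fun_upd_minus[of e0 s k 0] by simp
    show ?thesis
      by (intro upd DERIV_diff DERIV_add DERIV_const DERIV_cmult)
  qed
  ultimately show ?thesis
    using False unfolding phase_def phase_deriv_def by simp
qed

lemma partial_deriv_muf:
  assumes i: "i \<in> {1..I}"
  shows "partial_deriv (\<lambda>e. muf e i m n) e0 s =
    (of_real (of_bool (s = k_gain i)) + \<i> * of_real (g i * phase_deriv i m n s))
      * exp (\<i> * of_real (phase p (e0 (k_delay i)) (e0 (k_phase i)) i m n))"
proof (rule partial_deriv_eqI)
  have gain: "((\<lambda>x. (e0(s := x)) (k_gain i)) has_real_derivative of_bool (s = k_gain i)) (at (e0 s))"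
    using has_real_derivative_fun_upd_minus[of e0 s "k_gain i" 0] by simp
  have muf_polar: "(\<lambda>x. muf (e0(s := x)) i m n) = (\<lambda>x. of_real ((e0(s := x)) (k_gain i))
      * exp (\<i> * of_real (phase (pos_of (e0(s := x))) ((e0(s := x)) (k_delay i)) ((e0(s := x)) (k_phase i)) i m n)))"
    unfolding muf_eq mu_eq_polar ..
  show "((\<lambda>x. muf (e0(s := x)) i m n) has_vector_derivative
    (of_real (of_bool (s = k_gain i)) + \<i> * of_real (g i * phase_deriv i m n s))
      * exp (\<i> * of_real (phase p (e0 (k_delay i)) (e0 (k_phase i)) i m n))) (at (e0 s))"
    using has_vector_derivative_polar[OF gain has_real_derivative_phase[OF i]]
    unfolding muf_polar by (simp only: fun_upd_triv e0_gain[OF i] pos_of_e0)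
qed

lemma FIM_entry:
  assumes "s < d" and "s' < d"
  shows "J $$ (s, s') = 2 / sigma^2 * (\<Sum>i\<in>{1..I}. \<Sum>n\<in>{1..N}. \<Sum>m\<in>{1..M}.
    of_bool (s = k_gain i) * of_bool (s' = k_gain i) + (g i)^2 * phase_deriv i m n s * phase_deriv i m n s')"
proof -
  have "Re (cnj (partial_deriv (\<lambda>e. muf e i m n) e0 s) * partial_deriv (\<lambda>e. muf e i m n) e0 s')
     = of_bool (s = k_gain i) * of_bool (s' = k_gain i) + (g i)^2 * phase_deriv i m n s * phase_deriv i m n s'"
    if "i \<in> {1..I}" for i m n
    unfolding partial_deriv_muf[OF that] Re_cnj_mult_polar by (simp add: power2_eq_square mult_ac)
  then show ?thesis
    using assms unfolding FIM_def by (simp add: Re_sum)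
qed

lemma phase_deriv_position:
  assumes "i \<in> {1..I}" and "a < 3"
  shows "phase_deriv i m n a = steering_deriv i m a + omega n * (- unit_dir i a / c)"
  using assms nuisance_index_bounds[OF assms(1)]
  unfolding phase_deriv_def position_phase_deriv_def by auto

lemma phase_deriv_nuisance:
  assumes "3 \<le> s"
  shows "phase_deriv i m n s = of_bool (s = k_phase i) + omega n * of_bool (s = k_delay i)"
  using assms unfolding phase_deriv_def by simp

lemma FIM_position_block:
  assumes "a < 3" and "a' < 3"
  shows "J $$ (a, a') = position_info a a'"
proof -
  have "a < d" "a' < d" using assms d_ge_3 by auto
  moreover have "of_bool (a = k_gain i) * of_bool (a' = k_gain i)
      + (g i)^2 * phase_deriv i m n a * phase_deriv i m n a'
    = (g i)^2 * position_phase_deriv i m n a * position_phase_deriv i m n a'" if "i \<in> {1..I}" for i m n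
    using assms nuisance_index_bounds[OF that]
    unfolding phase_deriv_def by auto
  ultimately show ?thesis
    unfolding position_info_def by (simp add: FIM_entry)
qed

lemma FIM_position_nuisance:
  assumes a: "a < 3" and s: "s \<in> {3..<d}"
  shows "J $$ (a, s) = 2 / sigma^2 * (\<Sum>i\<in>{1..I}. (g i)^2 *
      (of_bool (s = k_phase i) * real N * steering_sum i a
       - of_bool (s = k_delay i) * real M * omega_sq_sum * unit_dir i a / c))"
    and "J $$ (s, a) = J $$ (a, s)"
proof -
  have "(\<Sum>n\<in>{1..N}. \<Sum>m\<in>{1..M}. of_bool (a = k_gain i) * of_bool (s = k_gain i)
          + (g i)^2 * phase_deriv i m n a * phase_deriv i m n s)
      = (g i)^2 * (of_bool (s = k_phase i) * real N * steering_sum i a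
          - of_bool (s = k_delay i) * real M * omega_sq_sum * unit_dir i a / c)"
    if i: "i \<in> {1..I}" for i
  proof -
    define z t where "z = (of_bool (s = k_phase i) :: real)" and "t = (of_bool (s = k_delay i) :: real)"
    have "a \<noteq> k_gain i" using a nuisance_index_bounds[OF i] by auto
    moreover have "phase_deriv i m n s = z + omega n * t" for m n
      using s unfolding z_def t_def by (simp add: phase_deriv_nuisance)
    ultimately have "(\<Sum>n\<in>{1..N}. \<Sum>m\<in>{1..M}. of_bool (a = k_gain i) * of_bool (s = k_gain i)
          + (g i)^2 * phase_deriv i m n a * phase_deriv i m n s)
        = (g i)^2 * (\<Sum>n\<in>{1..N}. \<Sum>m\<in>{1..M}.
            (steering_deriv i m a + omega n * (- unit_dir i a / c)) * (z + omega n * t))"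
      unfolding phase_deriv_position[OF i a] by (simp add: sum_distrib_left mult.assoc)
    also have "\<dots> = (g i)^2 * (z * real N * steering_sum i a - t * real M * omega_sq_sum * unit_dir i a / c)"
      unfolding sum_sum_mult_affine_centered[OF finite_atLeastAtMost finite_atLeastAtMost sum_omega]
        steering_sum_def omega_sq_sum_def by (simp add: algebra_simps)
    finally show ?thesis
      unfolding z_def t_def .
  qed
  moreover have "a < d" "s < d" using a s d_ge_3 by auto
  ultimately show "J $$ (a, s) = 2 / sigma^2 * (\<Sum>i\<in>{1..I}. (g i)^2 *
      (of_bool (s = k_phase i) * real N * steering_sum i a
       - of_bool (s = k_delay i) * real M * omega_sq_sum * unit_dir i a / c))"
    by (simp add: FIM_entry)
  show "J $$ (s, a) = J $$ (a, s)"
    using \<open>a < d\<close> \<open>s < d\<close> by (simp add: FIM_entry mult_ac)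
qed

lemma FIM_nuisance:
  assumes s: "s \<in> {3..<d}" and s': "s' \<in> {3..<d}"
  shows "J $$ (s, s') = 2 / sigma^2 * (\<Sum>i\<in>{1..I}.
      real M * real N * of_bool (s = k_gain i) * of_bool (s' = k_gain i)
      + (g i)^2 * real M * (real N * of_bool (s = k_phase i) * of_bool (s' = k_phase i)
          + omega_sq_sum * of_bool (s = k_delay i) * of_bool (s' = k_delay i)))"
proof -
  have "(\<Sum>n\<in>{1..N}. \<Sum>m\<in>{1..M}. of_bool (s = k_gain i) * of_bool (s' = k_gain i)
          + (g i)^2 * phase_deriv i m n s * phase_deriv i m n s')
      = real M * real N * of_bool (s = k_gain i) * of_bool (s' = k_gain i)
      + (g i)^2 * real M * (real N * of_bool (s = k_phase i) * of_bool (s' = k_phase i)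
          + omega_sq_sum * of_bool (s = k_delay i) * of_bool (s' = k_delay i))" for i
  proof -
    define z t z' t' where "z = (of_bool (s = k_phase i) :: real)" and "t = (of_bool (s = k_delay i) :: real)"
      and "z' = (of_bool (s' = k_phase i) :: real)" and "t' = (of_bool (s' = k_delay i) :: real)"
    define y where "y = (of_bool (s = k_gain i) * of_bool (s' = k_gain i) :: real)"
    have "phase_deriv i m n s = z + omega n * t" "phase_deriv i m n s' = z' + omega n * t'" for m n
      using s s' unfolding z_def t_def z'_def t'_def by (simp_all add: phase_deriv_nuisance)
    then have "(\<Sum>n\<in>{1..N}. \<Sum>m\<in>{1..M}. y + (g i)^2 * phase_deriv i m n s * phase_deriv i m n s')
        = (\<Sum>n\<in>{1..N}. \<Sum>m\<in>{1..M}. y)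
          + (g i)^2 * (\<Sum>n\<in>{1..N}. \<Sum>m\<in>{1..M}. (z + omega n * t) * (z' + omega n * t'))"
      by (simp only: sum.distrib sum_distrib_left mult.assoc)
    also have "\<dots> = real M * real N * y + (g i)^2 * real M * (real N * z * z' + omega_sq_sum * t * t')"
      unfolding sum_sum_mult_affine_centered[OF finite_atLeastAtMost finite_atLeastAtMost sum_omega]
        omega_sq_sum_def by (simp add: algebra_simps)
    finally show ?thesis
      unfolding y_def z_def t_def z'_def t'_def by (simp add: mult.assoc)
  qed
  moreover have "s < d" "s' < d" using s s' by auto
  ultimately show ?thesis
    by (simp add: FIM_entry)
qed

lemma FIM_nuisance_offdiag:
  assumes "s \<in> {3..<d}" and "s' \<in> {3..<d}" and "s \<noteq> s'"
  shows "J $$ (s, s') = 0"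
  unfolding FIM_nuisance[OF assms(1,2)] using assms(3) by (auto intro!: sum.neutral simp: of_bool_def)

lemma FIM_nuisance_diag_pos:
  assumes s: "s \<in> {3..<d}"
  shows "J $$ (s, s) > 0"
proof -
  define t where "t i = real M * real N * of_bool (s = k_gain i) * of_bool (s = k_gain i)
      + (g i)^2 * real M * (real N * of_bool (s = k_phase i) * of_bool (s = k_phase i)
          + omega_sq_sum * of_bool (s = k_delay i) * of_bool (s = k_delay i))" for i
  obtain i0 where i0: "i0 \<in> {1..I}" "s = k_delay i0 \<or> s = k_phase i0 \<or> s = k_gain i0"
    using s nuisance_indices by blast
  have pos: "real M > 0" "real N > 0" "(g i0)^2 > 0" "omega_sq_sum > 0"
    using M_pos N_pos g_nz[OF i0(1)] omega_sq_sum_pos by auto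
  have "t i \<ge> 0" for i
    unfolding t_def using pos by (intro add_nonneg_nonneg mult_nonneg_nonneg) simp_all
  moreover have "t i0 > 0"
    using i0(2) pos unfolding t_def
    by (elim disjE) (simp_all add: add_pos_nonneg add_nonneg_pos)
  ultimately have "(\<Sum>i\<in>{1..I}. t i) > 0"
    using i0(1) by (intro sum_pos2) auto
  then show ?thesis
    using sigma_nz unfolding FIM_nuisance[OF s s] t_def by simp
qed

lemma nuisance_indices_distinct:
  assumes "i \<in> {1..I}" and "j \<in> {1..I}"
  shows "k_delay i \<noteq> k_phase j" and "k_delay i \<noteq> k_gain j" and "k_phase i \<noteq> k_gain j"
  using assms delay_phase_disjoint delay_gain_disjoint phase_gain_disjoint by blast+

lemma phase_index_eq_iff:
  assumes "i0 \<in> {1..I}" and "i \<in> {1..I}"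
  shows "k_phase i0 = k_phase i \<longleftrightarrow> i = i0"
  using inj_on_eq_iff[OF inj_phase assms] by auto

lemma FIM_position_phase:
  assumes i0: "i0 \<in> {1..I}" and a: "a < 3"
  shows "J $$ (a, k_phase i0) = 2 / sigma^2 * ((g i0)^2 * real N * steering_sum i0 a)"
proof -
  have "(\<Sum>i\<in>{1..I}. (g i)^2 * (of_bool (k_phase i0 = k_phase i) * real N * steering_sum i a
       - of_bool (k_phase i0 = k_delay i) * real M * omega_sq_sum * unit_dir i a / c))
     = (\<Sum>i\<in>{1..I}. if i = i0 then (g i0)^2 * real N * steering_sum i0 a else 0)"
    using phase_index_eq_iff[OF i0] nuisance_indices_distinct(1)[OF _ i0]
    by (intro sum.cong) (auto simp: eq_commute[of "k_phase i0"])
  then show ?thesis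
    unfolding FIM_position_nuisance(1)[OF a nuisance_index_bounds(2)[OF i0]] using i0 by simp
qed

lemma FIM_phase_phase:
  assumes i0: "i0 \<in> {1..I}"
  shows "J $$ (k_phase i0, k_phase i0) = 2 / sigma^2 * ((g i0)^2 * real M * real N)"
proof -
  have "(\<Sum>i\<in>{1..I}. real M * real N * of_bool (k_phase i0 = k_gain i) * of_bool (k_phase i0 = k_gain i)
      + (g i)^2 * real M * (real N * of_bool (k_phase i0 = k_phase i) * of_bool (k_phase i0 = k_phase i)
          + omega_sq_sum * of_bool (k_phase i0 = k_delay i) * of_bool (k_phase i0 = k_delay i)))
     = (\<Sum>i\<in>{1..I}. if i = i0 then (g i0)^2 * real M * real N else 0)"
    using phase_index_eq_iff[OF i0] nuisance_indices_distinct(1)[OF _ i0]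
      nuisance_indices_distinct(3)[OF i0] by (intro sum.cong) (auto simp: eq_commute[of "k_phase i0"])
  then show ?thesis
    unfolding FIM_nuisance[OF nuisance_index_bounds(2)[OF i0] nuisance_index_bounds(2)[OF i0]]
    using i0 by simp
qed

lemma FIM_position_gain:
  assumes i0: "i0 \<in> {1..I}" and a: "a < 3"
  shows "J $$ (a, k_gain i0) = 0"
proof -
  have "k_gain i0 \<noteq> k_phase i" "k_gain i0 \<noteq> k_delay i" if "i \<in> {1..I}" for i
    using nuisance_indices_distinct[OF that i0] by auto
  then show ?thesis
    unfolding FIM_position_nuisance(1)[OF a nuisance_index_bounds(3)[OF i0]] by simp
qed

lemma FIM_position_delay:
  assumes s: "s \<in> k_delay ` {1..I}" and a: "a < 3"
  shows "J $$ (a, s) = - (2 / sigma^2 * (real M * omega_sq_sum / c * delay_moment k_delay s a))"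
proof -
  have s3: "s \<in> {3..<d}" using s nuisance_indices by blast
  have "(\<Sum>i\<in>{1..I}. (g i)^2 * (of_bool (s = k_phase i) * real N * steering_sum i a
       - of_bool (s = k_delay i) * real M * omega_sq_sum * unit_dir i a / c))
     = (\<Sum>i\<in>{1..I}. - (real M * omega_sq_sum / c * (if k_delay i = s then (g i)^2 * unit_dir i a else 0)))"
    using s nuisance_indices_distinct(1) by (intro sum.cong) auto
  then show ?thesis
    unfolding FIM_position_nuisance(1)[OF a s3] delay_moment_eq by (simp add: sum_negf sum_distrib_left)
qed

lemma FIM_delay_delay:
  assumes s: "s \<in> k_delay ` {1..I}"
  shows "J $$ (s, s) = 2 / sigma^2 * (real M * omega_sq_sum * delay_weight k_delay s)"
proof -
  have s3: "s \<in> {3..<d}" using s nuisance_indices by blast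
  have "(\<Sum>i\<in>{1..I}. real M * real N * of_bool (s = k_gain i) * of_bool (s = k_gain i)
      + (g i)^2 * real M * (real N * of_bool (s = k_phase i) * of_bool (s = k_phase i)
          + omega_sq_sum * of_bool (s = k_delay i) * of_bool (s = k_delay i)))
     = (\<Sum>i\<in>{1..I}. real M * omega_sq_sum * (if k_delay i = s then (g i)^2 else 0))"
    using s nuisance_indices_distinct(1,2) by (intro sum.cong) auto
  then show ?thesis
    unfolding FIM_nuisance[OF s3 s3] delay_weight_eq by (simp add: sum_distrib_left)
qed

lemma schur_sum_nuisance:
  assumes a: "a < 3" and a': "a' < 3"
  shows "(\<Sum>s\<in>{3..<d}. J $$ (a, s) * J $$ (s, a') / J $$ (s, s))
    = (\<Sum>i\<in>{1..I}. phase_info_loss i a a') + delay_info k_delay a a'"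
proof -
  define h where "h s = J $$ (a, s) * J $$ (s, a') / J $$ (s, s)" for s
  have nuis: "s \<in> {3..<d}" if "s \<in> k_delay ` {1..I} \<union> k_phase ` {1..I} \<union> k_gain ` {1..I}" for s
    using that nuisance_indices by blast
  have nonzero: "sigma^2 \<noteq> 0" "real M \<noteq> 0" "real N \<noteq> 0" "omega_sq_sum \<noteq> 0"
    using sigma_nz M_pos N_pos omega_sq_sum_pos by auto
  have "(\<Sum>s\<in>{3..<d}. h s)
      = (\<Sum>s\<in>k_delay ` {1..I}. h s) + (\<Sum>s\<in>k_phase ` {1..I}. h s) + (\<Sum>s\<in>k_gain ` {1..I}. h s)"
    unfolding nuisance_indices using delay_phase_disjoint delay_gain_disjoint phase_gain_disjoint
    by (simp add: sum.union_disjoint Int_Un_distrib2)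
  also have "(\<Sum>s\<in>k_delay ` {1..I}. h s) = delay_info k_delay a a'"
    unfolding delay_info_def h_def
  proof (rule sum.cong[OF refl])
    fix s assume s: "s \<in> k_delay ` {1..I}"
    have "J $$ (s, a') = J $$ (a', s)" using FIM_position_nuisance(2)[OF a'] nuis s by blast
    then show "J $$ (a, s) * J $$ (s, a') / J $$ (s, s)
      = delay_scale * delay_moment k_delay s a * delay_moment k_delay s a' / delay_weight k_delay s"
      using nonzero delay_weight_pos[OF s]
      unfolding FIM_position_delay[OF s a] FIM_position_delay[OF s a'] FIM_delay_delay[OF s] delay_scale_def
      by (simp add: field_simps power2_eq_square)
  qed
  also have "(\<Sum>s\<in>k_phase ` {1..I}. h s) = (\<Sum>i\<in>{1..I}. phase_info_loss i a a')"
    unfolding sum.reindex[OF inj_phase]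
  proof (rule sum.cong[OF refl])
    fix i assume i: "i \<in> {1..I}"
    have "J $$ (k_phase i, a') = J $$ (a', k_phase i)"
      using FIM_position_nuisance(2)[OF a'] nuis i by blast
    then show "(h \<circ> k_phase) i = phase_info_loss i a a'"
      using nonzero g_nz[OF i]
      unfolding h_def o_def FIM_position_phase[OF i a] FIM_position_phase[OF i a'] FIM_phase_phase[OF i]
        phase_info_loss_def
      by (simp add: field_simps power2_eq_square)
  qed
  also have "(\<Sum>s\<in>k_gain ` {1..I}. h s) = 0"
    unfolding h_def using FIM_position_gain[OF _ a] by (auto intro!: sum.neutral)
  finally show ?thesis
    unfolding h_def by simp
qed

lemma EFIM3_layout:
  shows "EFIM3 J \<in> carrier_mat 3 3"
    and "a < 3 \<Longrightarrow> a' < 3 \<Longrightarrow>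
      EFIM3 J $$ (a, a') = position_info a a' - (\<Sum>i\<in>{1..I}. phase_info_loss i a a') - delay_info k_delay a a'"
proof -
  have J: "J \<in> carrier_mat d d" unfolding FIM_def by simp
  have diag: "J $$ (s, s) \<noteq> 0" if "s \<in> {3..<d}" for s
    using FIM_nuisance_diag_pos[OF that] by simp
  show "EFIM3 J \<in> carrier_mat 3 3"
    by (rule EFIM3_diagonal_nuisance(1)[OF J d_ge_3]) (use FIM_nuisance_offdiag diag in auto)
  assume a: "a < 3" and a': "a' < 3"
  have "EFIM3 J $$ (a, a') = J $$ (a, a') - (\<Sum>s\<in>{3..<d}. J $$ (a, s) * J $$ (s, a') / J $$ (s, s))"
    by (rule EFIM3_diagonal_nuisance(2)[OF J d_ge_3]) (use FIM_nuisance_offdiag diag a a' in auto)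
  then show "EFIM3 J $$ (a, a') = position_info a a' - (\<Sum>i\<in>{1..I}. phase_info_loss i a a') - delay_info k_delay a a'"
    unfolding FIM_position_block[OF a a'] schur_sum_nuisance[OF a a'] by simp
qed

end

section \<open>Separate versus shared clocks\<close>

context multipose_model
begin

lemma VLA_parameter_layout:
  "parameter_layout I M N lam c df sigma q Om del p g (3 + 3 * I)
     (\<lambda>i. 2 + i) (\<lambda>i. 1 + I + 2 * i) (\<lambda>i. 2 + I + 2 * i)
     (VLA_param I p tauV g b) (mu_VLA lam c df N q Om del I)"
proof (intro parameter_layout.intro multipose_model_axioms parameter_layout_axioms.intro)
  show "{3..<3 + 3 * I}
      = (\<lambda>i. 2 + i) ` {1..I} \<union> (\<lambda>i. 2 + I + 2 * i) ` {1..I} \<union> (\<lambda>i. 1 + I + 2 * i) ` {1..I}"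
    (is "_ = ?S")
  proof (intro equalityI subsetI)
    fix s assume s: "s \<in> {3..<3 + 3 * I}"
    show "s \<in> ?S"
    proof (cases "s < 3 + I")
      case True
      then have "s = 2 + (s - 2)" "s - 2 \<in> {1..I}" using s by auto
      then show ?thesis by blast
    next
      case False
      define i where "i = (s - (3 + I)) div 2 + 1"
      have "i \<in> {1..I}" using s False unfolding i_def by auto
      moreover have "s = 1 + I + 2 * i \<or> s = 2 + I + 2 * i"
        using False unfolding i_def by (cases "even (s - (3 + I))") (auto elim!: evenE oddE)
      ultimately show ?thesis by blast
    qed
  qed auto
  show "VLA_param I p tauV g b (1 + I + 2 * i) = g i" if i: "i \<in> {1..I}" for i
  proof -
    obtain k where "i = Suc k" using i by (cases i) auto
    then show ?thesis unfolding VLA_param_def by simp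
  qed
  show "(\<lambda>i. 2 + I + 2 * i) ` {1..I} \<inter> (\<lambda>i. 1 + I + 2 * i) ` {1..I} = {}"
    by (auto; presburger)
qed (auto simp: inj_on_def VLA_param_def mu_VLA_def)

lemma RLA_parameter_layout:
  assumes "I > 0"
  shows "parameter_layout I M N lam c df sigma q Om del p g (4 + 2 * I)
     (\<lambda>i. 3) (\<lambda>i. 2 + 2 * i) (\<lambda>i. 3 + 2 * i)
     (RLA_param I p tauR g b) (mu_RLA lam c df N q Om del I)"
proof (intro parameter_layout.intro multipose_model_axioms parameter_layout_axioms.intro)
  show "{3..<4 + 2 * I} = (\<lambda>i. 3) ` {1..I} \<union> (\<lambda>i. 3 + 2 * i) ` {1..I} \<union> (\<lambda>i. 2 + 2 * i) ` {1..I}"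
    (is "_ = ?S")
  proof (intro equalityI subsetI)
    fix s assume s: "s \<in> {3..<4 + 2 * I}"
    show "s \<in> ?S"
    proof (cases "s = 3")
      case True
      then show ?thesis using assms by (auto simp: image_constant_conv)
    next
      case False
      define i where "i = (s - 2) div 2"
      have "i \<in> {1..I}" using s False unfolding i_def by auto
      moreover have "s = 2 + 2 * i \<or> s = 3 + 2 * i"
        using s unfolding i_def by (cases "even s") (auto elim!: evenE oddE)
      ultimately show ?thesis by blast
    qed
  qed auto
  show "RLA_param I p tauR g b (2 + 2 * i) = g i" if i: "i \<in> {1..I}" for i
  proof -
    obtain k where "i = Suc k" using i by (cases i) auto
    then show ?thesis unfolding RLA_param_def by simp
  qed
  show "(\<lambda>i. 3) ` {1..I} \<inter> (\<lambda>i. 2 + 2 * i) ` {1..I} = {}"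
    by (auto simp: image_constant_conv)
  show "(\<lambda>i. 3) ` {1..I} \<inter> (\<lambda>i. 3 + 2 * i) ` {1..I} = {}"
    by auto
  show "(\<lambda>i. 3 + 2 * i) ` {1..I} \<inter> (\<lambda>i. 2 + 2 * i) ` {1..I} = {}"
    by (auto; presburger)
  show "inj_on (\<lambda>i. 3 + 2 * i) {1..I}"
    by (auto simp: inj_on_def)
  show "RLA_param I p tauR g b k = p $ k" if "k < 3" for k
    using that unfolding RLA_param_def by simp
  show "mu_RLA lam c df N q Om del I e i m n =
      mu lam c df N q Om del (pos_of e) (e 3) (e (2 + 2 * i)) (e (3 + 2 * i)) i m n" for e i m n
    unfolding mu_RLA_def ..
qed simp

lemma EFIM3_RLA_minus_VLA_entry:
  assumes I: "I > 0" and a: "a < 3" and a': "a' < 3"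
  shows "EFIM3 (FIM sigma I M N (4 + 2 * I) (mu_RLA lam c df N q Om del I) (RLA_param I p tauR g b)) $$ (a, a')
    - EFIM3 (FIM sigma I M N (3 + 3 * I) (mu_VLA lam c df N q Om del I) (VLA_param I p tauV g b)) $$ (a, a')
    = (\<Sum>i\<in>{1..I-1}. \<Sum>j\<in>{i+1..I}. delay_scale * ((g i)^2 * (g j)^2 / (\<Sum>k\<in>{1..I}. (g k)^2))
        * (unit_dir i a - unit_dir j a) * (unit_dir i a' - unit_dir j a'))"
proof -
  define W where "W = (\<Sum>k\<in>{1..I}. (g k)^2)"
  have W: "W > 0"
    unfolding W_def using I g_nz by (intro sum_pos2[of _ 1]) auto
  have "EFIM3 (FIM sigma I M N (4 + 2 * I) (mu_RLA lam c df N q Om del I) (RLA_param I p tauR g b)) $$ (a, a')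
    - EFIM3 (FIM sigma I M N (3 + 3 * I) (mu_VLA lam c df N q Om del I) (VLA_param I p tauV g b)) $$ (a, a')
    = delay_info (\<lambda>i. 2 + i) a a' - delay_info (\<lambda>i. 3) a a'"
    using parameter_layout.EFIM3_layout(2)[OF VLA_parameter_layout a a', of tauV b]
      parameter_layout.EFIM3_layout(2)[OF RLA_parameter_layout[OF I] a a', of tauR b]
    by simp
  also have "\<dots> = delay_scale / W * (W * (\<Sum>i\<in>{1..I}. (g i)^2 * unit_dir i a * unit_dir i a')
      - (\<Sum>i\<in>{1..I}. (g i)^2 * unit_dir i a) * (\<Sum>i\<in>{1..I}. (g i)^2 * unit_dir i a'))"
    unfolding delay_info_inj[OF inj_on_add] delay_info_const[OF I] W_def[symmetric]
    using W by (simp add: field_simps)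
  also have "\<dots> = delay_scale / W * (\<Sum>i\<in>{1..I-1}. \<Sum>j\<in>{i+1..I}.
      (g i)^2 * (g j)^2 * (unit_dir i a - unit_dir j a) * (unit_dir i a' - unit_dir j a'))"
    unfolding lagrange_identity_weighted W_def by (simp add: mult.assoc)
  finally show ?thesis
    unfolding W_def sum_distrib_left by (simp add: mult_ac)
qed

lemma EFIM3_RLA_minus_VLA:
  assumes I: "I > 0"
  shows "EFIM3 (FIM sigma I M N (4 + 2 * I) (mu_RLA lam c df N q Om del I) (RLA_param I p tauR g b))
    - EFIM3 (FIM sigma I M N (3 + 3 * I) (mu_VLA lam c df N q Om del I) (VLA_param I p tauV g b))
    = mat 3 3 (\<lambda>(a, a'). \<Sum>i\<in>{1..I-1}. \<Sum>j\<in>{i+1..I}.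
        delay_scale * ((g i)^2 * (g j)^2 / (\<Sum>k\<in>{1..I}. (g k)^2))
        * (unit_dir i a - unit_dir j a) * (unit_dir i a' - unit_dir j a'))"
  using parameter_layout.EFIM3_layout(1)[OF VLA_parameter_layout, of tauV b]
    parameter_layout.EFIM3_layout(1)[OF RLA_parameter_layout[OF I], of tauR b]
  by (intro eq_matI) (auto simp: EFIM3_RLA_minus_VLA_entry[OF I])

lemma delay_scale_eq:
  "delay_scale = 2 * pi^2 * df^2 * real M * real N * real (N + 1) * real (N + 2) / (3 * sigma^2 * c^2)"
  unfolding delay_scale_def omega_sq_sum_eq by (simp add: field_simps)

lemma index_normalized_diff:
  assumes "i \<in> {1..I}" and "j \<in> {1..I}" and "a < 3"
  shows "((1 / vnorm (p - del i)) \<cdot>\<^sub>v (p - del i) - (1 / vnorm (p - del j)) \<cdot>\<^sub>v (p - del j)) $ a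
    = unit_dir i a - unit_dir j a"
  using assms del_dim[of i] del_dim[of j] unfolding unit_dir_def by auto

lemma sum_sq_unit_dir_diff:
  assumes "i \<in> {1..I}" and "j \<in> {1..I}"
  shows "(\<Sum>k<3. (unit_dir i k - unit_dir j k)^2)
    = 2 * (1 - cos (arccos (((p - del i) \<bullet> (p - del j)) / (vnorm (p - del i) * vnorm (p - del j)))))"
  unfolding unit_dir_def using assms p_dim del_dim p_ne_del
  by (intro sum_sq_diff_normalized) (auto simp: minus_vec_eq_zero_iff)

end

theorem proposition1:
  fixes I M N :: nat and lam c df sigma :: real
    and q :: "nat \<Rightarrow> real Matrix.vec" and Om :: "nat \<Rightarrow> real mat"
    and del :: "nat \<Rightarrow> real Matrix.vec" and p :: "real Matrix.vec"
    and g b tauV :: "nat \<Rightarrow> real" and tauR :: real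
  assumes I2: "I \<ge> 2" and M1: "M \<ge> 1" and N2: "N \<ge> 2" and Neven: "even N"
    and lam: "lam > 0" and c: "c > 0" and df: "df > 0" and sigma: "sigma > 0"
    and q_dim: "\<And>m. m \<in> {1..M} \<Longrightarrow> q m \<in> carrier_vec 3"
    and Om_dim: "\<And>i. i \<in> {1..I} \<Longrightarrow> Om i \<in> carrier_mat 3 3"
    and Om_orth: "\<And>i. i \<in> {1..I} \<Longrightarrow> transpose_mat (Om i) * Om i = 1\<^sub>m 3"
    and Om_det: "\<And>i. i \<in> {1..I} \<Longrightarrow> det (Om i) = 1"
    and del_dim: "\<And>i. i \<in> {1..I} \<Longrightarrow> del i \<in> carrier_vec 3"
    and p_dim: "p \<in> carrier_vec 3"
    and p_ne: "\<And>i. i \<in> {1..I} \<Longrightarrow> p \<noteq> del i"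
    and g_pos: "\<And>i. i \<in> {1..I} \<Longrightarrow> g i > 0"
  defines "V \<equiv> EFIM3 (FIM sigma I M N (3 + 3 * I) (mu_VLA lam c df N q Om del I)
                        (VLA_param I p tauV g b))"
    and "R \<equiv> EFIM3 (FIM sigma I M N (4 + 2 * I) (mu_RLA lam c df N q Om del I)
                        (RLA_param I p tauR g b))"
    and "u \<equiv> (\<lambda>i. (1 / vnorm (p - del i)) \<cdot>\<^sub>v (p - del i))"
    and "zeta \<equiv> (\<lambda>i j. 2 * pi\<^sup>2 * df\<^sup>2 * real M * real N * real (N + 1) * real (N + 2)
                     / (3 * sigma\<^sup>2 * c\<^sup>2)
                   * ((g i)\<^sup>2 * (g j)\<^sup>2 / (\<Sum>k\<in>{1..I}. (g k)\<^sup>2)))"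
    and "rho \<equiv> (\<lambda>i j. arccos (((p - del i) \<bullet> (p - del j)) / (vnorm (p - del i) * vnorm (p - del j))))"
  shows "R - V = mat 3 3 (\<lambda>(a, a'). \<Sum>i\<in>{1..I-1}. \<Sum>j\<in>{i+1..I}.
                     zeta i j * ((u i - u j) $ a) * ((u i - u j) $ a'))
     \<and> mtrace (R - V) = (\<Sum>i\<in>{1..I-1}. \<Sum>j\<in>{i+1..I}. 2 * zeta i j * (1 - cos (rho i j)))"
proof -
  have g_nz: "g i \<noteq> 0" if "i \<in> {1..I}" for i
    using g_pos[OF that] by simp
  interpret multipose_model I M N lam c df sigma q Om del p g
    using M1 N2 Neven df sigma Om_dim del_dim p_dim p_ne g_nz by unfold_locales auto
  have I: "I > 0" using I2 by simp
  have zeta: "zeta i j = delay_scale * ((g i)^2 * (g j)^2 / (\<Sum>k\<in>{1..I}. (g k)^2))" for i j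
    unfolding zeta_def delay_scale_eq by simp
  have u: "(u i - u j) $ a = unit_dir i a - unit_dir j a"
    if "i \<in> {1..I-1}" and "j \<in> {i+1..I}" and "a < 3" for i j a
    using that unfolding u_def by (intro index_normalized_diff) auto
  have diff: "R - V = mat 3 3 (\<lambda>(a, a'). \<Sum>i\<in>{1..I-1}. \<Sum>j\<in>{i+1..I}.
      zeta i j * ((u i - u j) $ a) * ((u i - u j) $ a'))"
    unfolding R_def V_def EFIM3_RLA_minus_VLA[OF I]
    by (intro cong_mat) (auto simp: zeta u intro!: sum.cong)
  have "(\<Sum>k<3. ((u i - u j) $ k)^2) = 2 * (1 - cos (rho i j))"
    if "i \<in> {1..I-1}" and "j \<in> {i+1..I}" for i j
    using that sum_sq_unit_dir_diff[of i j] unfolding rho_def by (simp add: u)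
  then have "mtrace (R - V) = (\<Sum>i\<in>{1..I-1}. \<Sum>j\<in>{i+1..I}. 2 * zeta i j * (1 - cos (rho i j)))"
    unfolding diff mtrace_mat_sum_outer by (auto intro!: sum.cong)
  with diff show ?thesis ..
qed

end
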